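(* Every odd prism is cycle-extendable.
   Context: An odd prism is obtained from two disjoint odd cycles $w_0w_1\cdots w_{2k}w_0$ and $z_0z_1\cdots z_{2k}z_0$ ($k\ge1$) by adding the edges $w_iz_i$ for each $i\in\{0,\dots,2k\}$. A matching covered graph (connected, at least two vertices, every edge in a perfect matching) is cycle-extendable if for every even cycle $C$ the graph $G-V(C)$ has a perfect matching. *)

theory Defs
  imports Main
begin

definition simple_graph :: "'a set \<Rightarrow> 'a set set \<Rightarrow> bool" where
  "simple_graph V E \<longleftrightarrow> finite V \<and> (\<forall>e\<in>E. \<exists>u v. e = {u, v} \<and> u \<noteq> v \<and> u \<in> V \<and> v \<in> V)"

definition perfect_matching :: "'a set \<Rightarrow> 'a set set \<Rightarrow> 'a set set \<Rightarrow> bool" where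
  "perfect_matching V E M \<longleftrightarrow> M \<subseteq> E \<and> (\<forall>v\<in>V. \<exists>!e. e \<in> M \<and> v \<in> e)"

definition has_perfect_matching :: "'a set \<Rightarrow> 'a set set \<Rightarrow> bool" where
  "has_perfect_matching V E \<longleftrightarrow> (\<exists>M. perfect_matching V E M)"

definition graph_connected :: "'a set \<Rightarrow> 'a set set \<Rightarrow> bool" where
  "graph_connected V E \<longleftrightarrow>
     (\<forall>u\<in>V. \<forall>v\<in>V. (\<lambda>x y. {x, y} \<in> E)\<^sup>*\<^sup>* u v)"

definition matching_covered :: "'a set \<Rightarrow> 'a set set \<Rightarrow> bool" where
  "matching_covered V E \<longleftrightarrow> simple_graph V E \<and> graph_connected V E \<and> card V \<ge> 2 \<and>
     (\<forall>e\<in>E. \<exists>M. perfect_matching V E M \<and> e \<in> M)"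

definition is_cycle :: "'a set \<Rightarrow> 'a set set \<Rightarrow> 'a list \<Rightarrow> bool" where
  "is_cycle V E cs \<longleftrightarrow> length cs \<ge> 3 \<and> distinct cs \<and> set cs \<subseteq> V \<and>
     (\<forall>i < length cs. {cs ! i, cs ! ((i + 1) mod length cs)} \<in> E)"

definition even_cycle :: "'a set \<Rightarrow> 'a set set \<Rightarrow> 'a list \<Rightarrow> bool" where
  "even_cycle V E cs \<longleftrightarrow> is_cycle V E cs \<and> even (length cs)"

definition del_verts_E :: "'a set set \<Rightarrow> 'a set \<Rightarrow> 'a set set" where
  "del_verts_E E S = {e \<in> E. e \<inter> S = {}}"

definition cycle_extendable :: "'a set \<Rightarrow> 'a set set \<Rightarrow> bool" where
  "cycle_extendable V E \<longleftrightarrow> matching_covered V E \<and>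
     (\<forall>cs. even_cycle V E cs \<longrightarrow> has_perfect_matching (V - set cs) (del_verts_E E (set cs)))"

text \<open>The odd prism with cycles w_0..w_{2k} (vertices (False,i)) and z_0..z_{2k}
  (vertices (True,i)), plus the rungs w_i z_i.\<close>
definition prism_V :: "nat \<Rightarrow> (bool \<times> nat) set" where
  "prism_V k = UNIV \<times> {..<2*k+1}"

definition prism_E :: "nat \<Rightarrow> (bool \<times> nat) set set" where
  "prism_E k = {{(b, i), (b, (i + 1) mod (2*k+1))} | b i. i < 2*k+1}
             \<union> {{(False, i), (True, i)} | i. i < 2*k+1}"

end

theory Submission
  imports Defs
begin

text \<open>Suppose an even cycle C of the odd prism contains w_i but not z_i. Then both cycle
  neighbours of w_i are among w_{i-1}, w_{i+1}, so C uses the edge w_i w_{i+1} but not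
  z_i z_{i+1}. Deleting these two edges leaves a bipartite graph, and in its 2-colouring
  both deleted edges are monochromatic, because w_{i+1} and w_i are joined by a path of
  even length 2k. Along a closed walk the colour changes an even number of times, so an
  even cycle has an even number of monochromatic edges, whereas C has exactly one. Hence
  V(C) is a union of rungs, and the remaining rungs form a perfect matching of G - V(C).\<close>

lemma odd_card_value_changes_iff:
  fixes g :: "nat \<Rightarrow> bool"
  shows "odd (card {j. j < n \<and> g j \<noteq> g (Suc j)}) \<longleftrightarrow> g 0 \<noteq> g n"
proof (induction n)
  case (Suc n)
  have "{j. j < Suc n \<and> g j \<noteq> g (Suc j)}
      = {j. j < n \<and> g j \<noteq> g (Suc j)} \<union> (if g n \<noteq> g (Suc n) then {n} else {})"
    by (auto simp: less_Suc_eq)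
  then show ?case
    using Suc.IH by (auto simp: card_insert_if)
qed simp

lemma even_card_cyclic_value_changes:
  fixes g :: "nat \<Rightarrow> bool"
  shows "even (card {j. j < L \<and> g j \<noteq> g ((j + 1) mod L)})"
proof (cases L)
  case (Suc m)
  have "Suc j mod Suc m = Suc j" if "j < m" for j
    using that by simp
  then have "{j. j < Suc m \<and> g j \<noteq> g ((j + 1) mod Suc m)}
      = {j. j < m \<and> g j \<noteq> g (Suc j)} \<union> (if g m \<noteq> g 0 then {m} else {})"
    by (auto simp: less_Suc_eq)
  then show ?thesis
    using Suc odd_card_value_changes_iff[of m g] by (auto simp: card_insert_if)
qed simp

lemma even_card_cyclic_agreements:
  fixes g :: "nat \<Rightarrow> bool"
  assumes "even L"
  shows "even (card {j. j < L \<and> g j = g ((j + 1) mod L)})"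
proof -
  let ?A = "{j. j < L \<and> g j = g ((j + 1) mod L)}"
  let ?C = "{j. j < L \<and> g j \<noteq> g ((j + 1) mod L)}"
  have "card ?A + card ?C = card (?A \<union> ?C)"
    by (rule card_Un_disjoint[symmetric]) auto
  also have "?A \<union> ?C = {..<L}"
    by auto
  finally have "even (card ?A + card ?C)"
    using assms by simp
  then show ?thesis
    using even_card_cyclic_value_changes[of L g] by simp
qed

definition cycle_edge :: "'a list \<Rightarrow> nat \<Rightarrow> 'a set" where
  "cycle_edge cs j = {cs ! j, cs ! ((j + 1) mod length cs)}"

lemma cycle_edge_in_edges: "is_cycle V E cs \<Longrightarrow> j < length cs \<Longrightarrow> cycle_edge cs j \<in> E"
  unfolding is_cycle_def cycle_edge_def by blast

lemma cycle_edge_subset: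
  assumes "j < length cs"
  shows "cycle_edge cs j \<subseteq> set cs"
proof -
  have "0 < length cs" using assms by linarith
  then show ?thesis using assms unfolding cycle_edge_def by simp
qed

lemma cycle_edge_ends_distinct:
  assumes "distinct cs" "2 \<le> length cs" "j < length cs"
  shows "cs ! j \<noteq> cs ! ((j + 1) mod length cs)"
proof -
  have "(j + 1) mod length cs \<noteq> j" "(j + 1) mod length cs < length cs"
    using assms(2,3) by (auto simp: mod_Suc)
  then show ?thesis using assms(1,3) by (simp add: nth_eq_iff_index_eq)
qed

lemma inj_on_cycle_edge:
  assumes "distinct cs" "3 \<le> length cs"
  shows "inj_on (cycle_edge cs) {..<length cs}"
proof
  fix j1 j2 let ?L = "length cs"
  assume j: "j1 \<in> {..<?L}" "j2 \<in> {..<?L}" and eq: "cycle_edge cs j1 = cycle_edge cs j2"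
  have succ: "(j + 1) mod ?L < ?L" for j
    using assms(2) by (intro mod_less_divisor) linarith
  show "j1 = j2"
  proof (cases "cs ! j1 = cs ! j2")
    case True
    then show ?thesis using j assms(1) by (simp add: nth_eq_iff_index_eq)
  next
    case False
    then have "cs ! j1 = cs ! ((j2 + 1) mod ?L)" "cs ! ((j1 + 1) mod ?L) = cs ! j2"
      using eq unfolding cycle_edge_def by (auto simp: doubleton_eq_iff)
    then have "j1 = (j2 + 1) mod ?L" "(j1 + 1) mod ?L = j2"
      using j assms(1) succ by (simp_all add: nth_eq_iff_index_eq)
    then have "(j2 + 2) mod ?L = j2"
      by (simp add: mod_Suc_eq)
    then show ?thesis
      using j assms(2) by (simp add: mod_if split: if_split_asm)
  qed
qed

lemma cycle_two_neighbours:
  assumes "is_cycle V E cs" "v \<in> set cs"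
  obtains u w where "u \<noteq> w" "{v, u} \<in> cycle_edge cs ` {..<length cs}"
    "{v, w} \<in> cycle_edge cs ` {..<length cs}"
proof -
  let ?L = "length cs"
  have L: "3 \<le> ?L" and dist: "distinct cs"
    using assms(1) unfolding is_cycle_def by auto
  obtain p where p: "p < ?L" "cs ! p = v"
    using assms(2) by (metis in_set_conv_nth)
  obtain q where q: "q < ?L" "(q + 1) mod ?L = p"
  proof (cases p)
    case 0
    have "?L - 1 + 1 = ?L" using L by simp
    then have "(?L - 1 + 1) mod ?L = 0" by simp
    then show ?thesis using that[of "?L - 1"] L 0 by simp
  next
    case (Suc q) then show ?thesis using that[of q] p(1) by simp
  qed
  have edges: "cycle_edge cs p = {v, cs ! ((p + 1) mod ?L)}" "cycle_edge cs q = {v, cs ! q}"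
    using p q unfolding cycle_edge_def by auto
  have "cs ! ((p + 1) mod ?L) \<noteq> cs ! q"
  proof
    assume "cs ! ((p + 1) mod ?L) = cs ! q"
    then have "cycle_edge cs p = cycle_edge cs q"
      using edges by simp
    then have "p = q"
      using inj_on_cycle_edge[OF dist L] p(1) q(1) by (simp add: inj_on_eq_iff)
    then show False
      using cycle_edge_ends_distinct[OF dist _ p(1)] L q by simp
  qed
  then show thesis
    using that edges p(1) q(1) by (metis imageI lessThan_iff)
qed

lemma perfect_matching_Un:
  assumes M: "perfect_matching (V - S) (del_verts_E E S) M"
    and N: "perfect_matching S E N" and N_inside: "\<And>e. e \<in> N \<Longrightarrow> e \<subseteq> S"
  shows "perfect_matching V E (M \<union> N)"
  unfolding perfect_matching_def
proof (intro conjI ballI)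
  show "M \<union> N \<subseteq> E"
    using M N unfolding perfect_matching_def del_verts_E_def by blast
  have M_outside: "e \<inter> S = {}" if "e \<in> M" for e
    using M that unfolding perfect_matching_def del_verts_E_def by blast
  fix v assume "v \<in> V"
  show "\<exists>!e. e \<in> M \<union> N \<and> v \<in> e"
  proof (cases "v \<in> S")
    case True
    then obtain e where "e \<in> N" "v \<in> e" "\<And>e'. e' \<in> N \<Longrightarrow> v \<in> e' \<Longrightarrow> e' = e"
      using N unfolding perfect_matching_def by metis
    then show ?thesis
      using M_outside True by blast
  next
    case False
    then obtain e where "e \<in> M" "v \<in> e" "\<And>e'. e' \<in> M \<Longrightarrow> v \<in> e' \<Longrightarrow> e' = e"
      using M \<open>v \<in> V\<close> unfolding perfect_matching_def by (metis Diff_iff)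
    then show ?thesis
      using N_inside False by blast
  qed
qed

lemma prism_E_cases [consumes 1, case_names cycle rung]:
  assumes "e \<in> prism_E k"
  obtains (cycle) b j where "j < 2*k+1" "e = {(b, j), (b, (j + 1) mod (2*k+1))}"
    | (rung) j where "j < 2*k+1" "e = {(False, j), (True, j)}"
  using assms unfolding prism_E_def by blast

lemma prism_cycle_edge: "j < 2*k+1 \<Longrightarrow> {(b, j), (b, (j + 1) mod (2*k+1))} \<in> prism_E k"
  unfolding prism_E_def by blast

lemma prism_rung: "j < 2*k+1 \<Longrightarrow> {(False, j), (True, j)} \<in> prism_E k"
  unfolding prism_E_def by blast

lemma prism_succ_neq: "1 \<le> k \<Longrightarrow> (i::nat) < 2*k+1 \<Longrightarrow> (i + 1) mod (2*k+1) \<noteq> i"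
  by (cases "i = 2*k") auto

lemma prism_pred_succ:
  assumes "(j::nat) < 2*k+1"
  shows "((j + 1) mod (2*k+1) + 2*k) mod (2*k+1) = j"
proof -
  have "((j + 1) mod (2*k+1) + 2*k) mod (2*k+1) = (j + 1 + 2*k) mod (2*k+1)"
    by (rule mod_add_left_eq)
  also have "j + 1 + 2*k = j + (2*k+1)"
    by simp
  also have "(j + (2*k+1)) mod (2*k+1) = j"
    using assms by (metis mod_add_self2 mod_less)
  finally show ?thesis .
qed

lemma prism_neighbour:
  assumes "{(b, i), u} \<in> prism_E k"
  shows "u = (b, (i + 1) mod (2*k+1)) \<or> u = (b, (i + 2*k) mod (2*k+1)) \<or> u = (\<not> b, i)"
  using assms
proof (cases rule: prism_E_cases)
  case (cycle c j)
  then consider "(b, i) = (c, j)" "u = (c, (j + 1) mod (2*k+1))"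
    | "(b, i) = (c, (j + 1) mod (2*k+1))" "u = (c, j)"
    by (auto simp: doubleton_eq_iff)
  then show ?thesis
    by cases (use cycle(1) prism_pred_succ in auto)
next
  case (rung j)
  then show ?thesis
    by (cases b) (auto simp: doubleton_eq_iff)
qed

lemma simple_graph_prism:
  assumes "1 \<le> k"
  shows "simple_graph (prism_V k) (prism_E k)"
  unfolding simple_graph_def
proof (intro conjI ballI)
  show "finite (prism_V k)"
    unfolding prism_V_def by simp
  fix e assume "e \<in> prism_E k"
  then show "\<exists>u v. e = {u, v} \<and> u \<noteq> v \<and> u \<in> prism_V k \<and> v \<in> prism_V k"
  proof (cases rule: prism_E_cases)
    case (cycle b j)
    then show ?thesis
      using prism_succ_neq[OF assms cycle(1)] unfolding prism_V_def
      by (intro exI[of _ "(b, j)"] exI[of _ "(b, (j + 1) mod (2*k+1))"]) simp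
  next
    case (rung j)
    then show ?thesis
      unfolding prism_V_def by blast
  qed
qed

lemma prism_reachable_from_origin:
  assumes "i < 2*k+1"
  shows "(\<lambda>x y. {x, y} \<in> prism_E k)\<^sup>*\<^sup>* (False, 0) (b, i)"
  using assms
proof (induction i)
  case 0
  then show ?case
    using prism_rung[of 0 k] by (cases b) auto
next
  case (Suc i)
  then have "{(b, i), (b, Suc i)} \<in> prism_E k"
    using prism_cycle_edge[of i k b] by simp
  with Suc show ?case
    by (simp add: rtranclp.rtrancl_into_rtrancl)
qed

lemma graph_connected_prism: "graph_connected (prism_V k) (prism_E k)"
  unfolding graph_connected_def
proof (intro ballI)
  let ?R = "\<lambda>x y. {x, y} \<in> prism_E k"
  have "symp ?R"
    by (auto intro: sympI simp: insert_commute)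
  then have sym: "?R\<^sup>*\<^sup>* x y \<Longrightarrow> ?R\<^sup>*\<^sup>* y x" for x y
    by (meson symp_rtranclp sympD)
  fix u v assume "u \<in> prism_V k" "v \<in> prism_V k"
  then obtain b i c j where "u = (b, i)" "v = (c, j)" "i < 2*k+1" "j < 2*k+1"
    unfolding prism_V_def by auto
  then have "?R\<^sup>*\<^sup>* u (False, 0)" "?R\<^sup>*\<^sup>* (False, 0) v"
    using sym prism_reachable_from_origin by auto
  then show "?R\<^sup>*\<^sup>* u v"
    by (rule rtranclp_trans)
qed

lemma card_prism_V: "2 \<le> card (prism_V k)"
  unfolding prism_V_def by (simp add: card_cartesian_product)

definition rungs :: "nat \<Rightarrow> (bool \<times> nat) set \<Rightarrow> (bool \<times> nat) set set" where
  "rungs k S = {{(False, j), (True, j)} | j. j < 2*k+1 \<and> (False, j) \<notin> S}"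

lemma perfect_matching_rungs:
  assumes closed: "\<And>b j. (b, j) \<in> S \<Longrightarrow> (\<not> b, j) \<in> S"
  shows "perfect_matching (prism_V k - S) (del_verts_E (prism_E k) S) (rungs k S)"
  unfolding perfect_matching_def
proof (intro conjI ballI)
  show "rungs k S \<subseteq> del_verts_E (prism_E k) S"
    unfolding rungs_def del_verts_E_def using prism_rung closed by fastforce
  fix v assume "v \<in> prism_V k - S"
  then obtain b j where v: "v = (b, j)" "j < 2*k+1" "(b, j) \<notin> S"
    unfolding prism_V_def by auto
  then have "(False, j) \<notin> S"
    using closed[of False j] by (cases b) auto
  then show "\<exists>!e. e \<in> rungs k S \<and> v \<in> e"
    using v unfolding rungs_def by (intro ex1I[of _ "{(False, j), (True, j)}"]) auto
qed

lemma perfect_matching_prism_square: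
  assumes "1 \<le> k" "i < 2*k+1"
  defines "s \<equiv> (i + 1) mod (2*k+1)"
  shows "perfect_matching (UNIV \<times> {i, s}) (prism_E k) {{(False, i), (False, s)}, {(True, i), (True, s)}}"
  unfolding perfect_matching_def
proof (intro conjI ballI)
  show "{{(False, i), (False, s)}, {(True, i), (True, s)}} \<subseteq> prism_E k"
    using prism_cycle_edge[OF assms(2)] unfolding s_def by blast
  have "s \<noteq> i"
    using prism_succ_neq[OF assms(1,2)] unfolding s_def .
  then show "\<exists>!e. e \<in> {{(False, i), (False, s)}, {(True, i), (True, s)}} \<and> v \<in> e"
    if "v \<in> UNIV \<times> {i, s}" for v
    using that by (cases v) (auto intro!: ex1I[of _ "{(fst v, i), (fst v, s)}"])
qed

lemma matching_covered_prism:
  assumes "1 \<le> k"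
  shows "matching_covered (prism_V k) (prism_E k)"
  unfolding matching_covered_def
proof (intro conjI simple_graph_prism[OF assms] graph_connected_prism card_prism_V ballI)
  fix e assume "e \<in> prism_E k"
  then show "\<exists>M. perfect_matching (prism_V k) (prism_E k) M \<and> e \<in> M"
  proof (cases rule: prism_E_cases)
    case (cycle b j)
    let ?s = "(j + 1) mod (2*k+1)"
    have "perfect_matching (prism_V k) (prism_E k)
        (rungs k (UNIV \<times> {j, ?s}) \<union> {{(False, j), (False, ?s)}, {(True, j), (True, ?s)}})"
      by (rule perfect_matching_Un[OF perfect_matching_rungs
            perfect_matching_prism_square[OF assms cycle(1)]]) auto
    then show ?thesis
      using cycle(2) by (cases b) blast+
  next
    case (rung j)
    then show ?thesis
      using perfect_matching_rungs[of "{}" k] unfolding rungs_def del_verts_E_def by auto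
  qed
qed

lemma cycle_avoiding_rung_partner_uses_successor_edge:
  assumes cycle: "is_cycle (prism_V k) (prism_E k) cs"
    and "(b, i) \<in> set cs" and partner: "(\<not> b, i) \<notin> set cs"
  shows "{(b, i), (b, (i + 1) mod (2*k+1))} \<in> cycle_edge cs ` {..<length cs}"
proof -
  obtain u w where "u \<noteq> w"
    and u: "{(b, i), u} \<in> cycle_edge cs ` {..<length cs}"
    and w: "{(b, i), w} \<in> cycle_edge cs ` {..<length cs}"
    by (rule cycle_two_neighbours[OF cycle assms(2)])
  have neighbours: "x = (b, (i + 1) mod (2*k+1)) \<or> x = (b, (i + 2*k) mod (2*k+1))"
    if "{(b, i), x} \<in> cycle_edge cs ` {..<length cs}" for x
  proof -
    from that obtain j where "{(b, i), x} = cycle_edge cs j" "j \<in> {..<length cs}"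
      by (rule imageE)
    then have "{(b, i), x} \<in> prism_E k" "x \<in> set cs"
      using cycle_edge_in_edges[OF cycle] cycle_edge_subset[of j cs] by force+
    then show ?thesis
      using prism_neighbour[of b i x k] partner by auto
  qed
  have "u = (b, (i + 1) mod (2*k+1)) \<or> w = (b, (i + 1) mod (2*k+1))"
    using neighbours[OF u] neighbours[OF w] \<open>u \<noteq> w\<close> by auto
  then show ?thesis
    using u w by blast
qed

text \<open>prism_offset k i j is the distance from i + 1 forward to j on the cycle 0, ..., 2k;
  its parity colours the prism properly once the two edges between positions i and i + 1
  are deleted.\<close>

definition prism_offset :: "nat \<Rightarrow> nat \<Rightarrow> nat \<Rightarrow> nat" where
  "prism_offset k i j = (j + (2*k - i)) mod (2*k+1)"

definition prism_colouring :: "nat \<Rightarrow> nat \<Rightarrow> bool \<times> nat \<Rightarrow> bool" where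
  "prism_colouring k i x \<longleftrightarrow> fst x \<noteq> odd (prism_offset k i (snd x))"

lemma prism_offset_less:
  assumes "i < 2*k+1" "j < 2*k+1" "j \<noteq> i"
  shows "prism_offset k i j < 2*k"
proof (cases "i < j")
  case True
  then have "j + (2*k - i) = (j - i - 1) + (2*k+1)"
    using assms by simp
  then have "prism_offset k i j = (j - i - 1 + (2*k+1)) mod (2*k+1)"
    unfolding prism_offset_def by (simp only:)
  also have "\<dots> = j - i - 1"
    using assms(2) by (metis mod_add_self2 mod_less less_imp_diff_less)
  finally show ?thesis
    using assms(2) True by simp
next
  case False
  then show ?thesis
    using assms unfolding prism_offset_def by simp
qed

lemma prism_offset_succ:
  assumes "i < 2*k+1" "j < 2*k+1" "j \<noteq> i"
  shows "prism_offset k i ((j + 1) mod (2*k+1)) = Suc (prism_offset k i j)"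
proof -
  have "prism_offset k i ((j + 1) mod (2*k+1)) = Suc (j + (2*k - i)) mod (2*k+1)"
    unfolding prism_offset_def by (simp add: mod_add_left_eq)
  also have "\<dots> = Suc (prism_offset k i j) mod (2*k+1)"
    unfolding prism_offset_def by (simp add: mod_Suc_eq)
  also have "\<dots> = Suc (prism_offset k i j)"
    using prism_offset_less[OF assms] by simp
  finally show ?thesis .
qed

lemma prism_colouring_cut_edge:
  assumes "i < 2*k+1"
  shows "prism_colouring k i (b, i) = prism_colouring k i (b, (i + 1) mod (2*k+1))"
proof -
  have "prism_offset k i i = 2*k"
    using assms unfolding prism_offset_def by simp
  moreover have "prism_offset k i ((i + 1) mod (2*k+1)) = (i + 1 + (2*k - i)) mod (2*k+1)"
    unfolding prism_offset_def by (rule mod_add_left_eq)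
  moreover have "i + 1 + (2*k - i) = 2*k+1"
    using assms by simp
  ultimately show ?thesis
    unfolding prism_colouring_def by simp
qed

lemma prism_colouring_proper:
  assumes "{x, y} \<in> prism_E k" "x \<noteq> y" "i < 2*k+1"
    and not_cut: "\<And>b. {x, y} \<noteq> {(b, i), (b, (i + 1) mod (2*k+1))}"
  shows "prism_colouring k i x \<noteq> prism_colouring k i y"
  using assms(1)
proof (cases rule: prism_E_cases)
  case (cycle b j)
  then have "j \<noteq> i"
    using not_cut by blast
  then have "prism_offset k i ((j + 1) mod (2*k+1)) = Suc (prism_offset k i j)"
    using prism_offset_succ assms(3) cycle(1) by blast
  then show ?thesis
    using cycle(2) assms(2) unfolding prism_colouring_def by (auto simp: doubleton_eq_iff)
next
  case (rung j)
  then show ?thesis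
    using assms(2) unfolding prism_colouring_def by (auto simp: doubleton_eq_iff)
qed

lemma prism_even_cycle_contains_rung_partner:
  assumes even_cycle: "even_cycle (prism_V k) (prism_E k) cs" and "(b, i) \<in> set cs"
  shows "(\<not> b, i) \<in> set cs"
proof (rule ccontr)
  assume partner: "(\<not> b, i) \<notin> set cs"
  let ?L = "length cs"
  let ?cut = "\<lambda>c. {(c, i), (c, (i + 1) mod (2*k+1))}"
  let ?g = "\<lambda>j. prism_colouring k i (cs ! j)"
  have cycle: "is_cycle (prism_V k) (prism_E k) cs" and "even ?L"
    using even_cycle unfolding even_cycle_def by auto
  then have dist: "distinct cs" and L: "3 \<le> ?L" and i: "i < 2*k+1"
    using assms(2) unfolding is_cycle_def prism_V_def by auto
  obtain q where q: "q < ?L" "cycle_edge cs q = ?cut b"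
    using cycle_avoiding_rung_partner_uses_successor_edge[OF cycle assms(2) partner] by auto
  have "{j. j < ?L \<and> ?g j = ?g ((j + 1) mod ?L)} = {q}"
  proof (intro set_eqI iffI)
    fix j assume "j \<in> {j. j < ?L \<and> ?g j = ?g ((j + 1) mod ?L)}"
    then have j: "j < ?L" and mono: "?g j = ?g ((j + 1) mod ?L)"
      by auto
    have edge: "{cs ! j, cs ! ((j + 1) mod ?L)} \<in> prism_E k"
      using cycle_edge_in_edges[OF cycle j] unfolding cycle_edge_def .
    have ends: "cs ! j \<noteq> cs ! ((j + 1) mod ?L)"
      using cycle_edge_ends_distinct[OF dist _ j] L by simp
    have "\<exists>c. cycle_edge cs j = ?cut c"
    proof (rule ccontr)
      assume "\<nexists>c. cycle_edge cs j = ?cut c"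
      then have "?g j \<noteq> ?g ((j + 1) mod ?L)"
        using prism_colouring_proper[OF edge ends i] unfolding cycle_edge_def by blast
      then show False
        using mono by contradiction
    qed
    then obtain c where c: "cycle_edge cs j = ?cut c" ..
    have "c = b"
      using c partner cycle_edge_subset[OF j] by (cases c; cases b) auto
    with c q have "cycle_edge cs j = cycle_edge cs q"
      by simp
    then show "j \<in> {q}"
      using inj_on_cycle_edge[OF dist L] j q(1) by (simp add: inj_on_eq_iff)
  next
    fix j assume "j \<in> {q}"
    then show "j \<in> {j. j < ?L \<and> ?g j = ?g ((j + 1) mod ?L)}"
      using q prism_colouring_cut_edge[OF i, of b] unfolding cycle_edge_def
      by (auto simp: doubleton_eq_iff)
  qed
  then show False
    using even_card_cyclic_agreements[OF \<open>even ?L\<close>, of ?g] by simp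
qed

theorem proposition4p3:
  fixes k :: nat
  assumes "k \<ge> 1"
  shows "cycle_extendable (prism_V k) (prism_E k)"
  unfolding cycle_extendable_def
proof (intro conjI matching_covered_prism[OF assms] allI impI)
  fix cs assume "even_cycle (prism_V k) (prism_E k) cs"
  then have "perfect_matching (prism_V k - set cs) (del_verts_E (prism_E k) (set cs)) (rungs k (set cs))"
    by (intro perfect_matching_rungs prism_even_cycle_contains_rung_partner)
  then show "has_perfect_matching (prism_V k - set cs) (del_verts_E (prism_E k) (set cs))"
    unfolding has_perfect_matching_def ..
qed

end
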